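(* Under the standing assumptions, $\sum_{n\eta_2\le S\le n\eta_3}\Phi(S)=o(1)$ as $n\to\infty$, the sum being over integers $S$.
   Context: Parameters: integer $k\ge2$, constants $\alpha>0$, $r>0$, $0<p<1$; $d=n^{\alpha}$ (treated as an integer), $m=n\ln d$, $\tau=\frac1{1-p}$, $r_{cr}=\frac1{\ln\tau}$. Standing assumptions: $(2k-1)\alpha>1$, $k\alpha\le1$, $k\ge\frac{\tau\ln\tau}{\tau-1}$, and $r<r_{cr}$. Notation: $f(s)=1+\frac{p}{1-p}\cdot\frac{s^k-d^{-k}}{1-d^{-k}}$ for $s\in[0,1]$; $B(S)=\binom{n}{S}\left(\frac1d\right)^{S}\left(1-\frac1d\right)^{n-S}$; $W(S)=f(S/n)^{rm}$; $\Phi(S)=B(S)W(S)$. Let $\alpha_0=\frac{(2k-1)\alpha-1}{2(k-1)}$, and let $\eta_2,\eta_3,\mu$ be constants with $0<\eta_2<\eta_3<1$, $\alpha_0/\alpha-\mu\eta_2^{k-1}>0$, $\mu>\frac{kpr}{1-p}$, and $r\ln(1-p)+\eta_3>0$. *)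

theory Defs
  imports Complex_Main
begin

definition dd :: "real \<Rightarrow> nat \<Rightarrow> real" where
  "dd \<alpha> n = real n powr \<alpha>"

definition mm :: "real \<Rightarrow> nat \<Rightarrow> real" where
  "mm \<alpha> n = real n * ln (dd \<alpha> n)"

definition ff :: "nat \<Rightarrow> real \<Rightarrow> real \<Rightarrow> nat \<Rightarrow> real \<Rightarrow> real" where
  "ff k \<alpha> p n s = 1 + p / (1 - p) * ((s ^ k - (dd \<alpha> n) powi (- int k)) / (1 - (dd \<alpha> n) powi (- int k)))"

definition BB :: "real \<Rightarrow> nat \<Rightarrow> nat \<Rightarrow> real" where
  "BB \<alpha> n S = real (n choose S) * (1 / dd \<alpha> n) ^ S * (1 - 1 / dd \<alpha> n) ^ (n - S)"

definition WW :: "nat \<Rightarrow> real \<Rightarrow> real \<Rightarrow> real \<Rightarrow> nat \<Rightarrow> nat \<Rightarrow> real" where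
  "WW k \<alpha> r p n S = ff k \<alpha> p n (real S / real n) powr (r * mm \<alpha> n)"

definition Phi :: "nat \<Rightarrow> real \<Rightarrow> real \<Rightarrow> real \<Rightarrow> nat \<Rightarrow> nat \<Rightarrow> real" where
  "Phi k \<alpha> r p n S = BB \<alpha> n S * WW k \<alpha> r p n S"

end

theory Submission
  imports Defs "HOL-Real_Asymp.Real_Asymp"
begin

text \<open>Write \<open>\<tau> = 1/(1-p) = 1 + q\<close> and \<open>\<theta> = r ln \<tau> < 1\<close>. The hypothesis on \<open>k\<close> gives
  \<open>ln(1 + q s\<^sup>k) \<le> s ln \<tau>\<close> for \<open>0 < s \<le> 1\<close>, so \<open>W(S) \<le> d\<^bsup>\<theta> S\<^esup>\<close>, while
  \<open>B(S) \<le> 2\<^sup>n d\<^bsup>-S\<^esup>\<close>. Hence \<open>\<Phi>(S) \<le> 2\<^sup>n d\<^bsup>-(1-\<theta>) S\<^esup>\<close>, and for \<open>S \<ge> \<eta>\<^sub>2 n\<close> the factor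
  \<open>d\<^bsup>-(1-\<theta>) \<eta>\<^sub>2 n\<^esup> = n\<^bsup>-\<alpha> (1-\<theta>) \<eta>\<^sub>2 n\<^esup>\<close> overwhelms both \<open>2\<^sup>n\<close> and the \<open>n + 1\<close> terms.
  This crude estimate needs only the hypotheses on \<open>k\<close>, \<open>r\<close>, \<open>p\<close>, \<open>\<alpha> > 0\<close>, \<open>\<eta>\<^sub>2 > 0\<close> and \<open>\<eta>\<^sub>3 \<le> 1\<close>.\<close>

lemma one_plus_mult_ln_div_mono:
  fixes y q :: real
  assumes "0 < y" "y \<le> q"
  shows "(1 + y) * ln (1 + y) / y \<le> (1 + q) * ln (1 + q) / q"
proof (rule DERIV_nonneg_imp_nondecreasing[OF assms(2)])
  fix x assume "y \<le> x" "x \<le> q"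
  with assms have x: "x > 0" by auto
  have "((\<lambda>x. (1 + x) * ln (1 + x) / x) has_real_derivative
          ((ln (1 + x) + 1) * x - (1 + x) * ln (1 + x)) / x\<^sup>2) (at x)"
    using x by (auto intro!: derivative_eq_intros simp: divide_simps power2_eq_square)
  moreover have "((ln (1 + x) + 1) * x - (1 + x) * ln (1 + x)) / x\<^sup>2 \<ge> 0"
    using ln_add_one_self_le_self[of x] x by (auto simp: algebra_simps)
  ultimately show "\<exists>D. ((\<lambda>x. (1 + x) * ln (1 + x) / x) has_real_derivative D) (at x) \<and> D \<ge> 0"
    by blast
qed

text \<open>The function \<open>ln (ln (1 + q x\<^sup>k)) - ln x\<close> is nondecreasing on \<open>(0, 1]\<close>: with \<open>y = q x\<^sup>k\<close>
  the sign of its derivative is that of \<open>k y - (1 + y) ln (1 + y)\<close>, which is nonnegative by the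
  monotonicity above since \<open>y \<le> q\<close>.\<close>

lemma ln_one_plus_mult_power_le:
  fixes q s :: real and k :: nat
  assumes q: "q > 0" and k: "k \<ge> 1" "real k \<ge> (1 + q) * ln (1 + q) / q"
    and s: "0 < s" "s \<le> 1"
  shows "ln (1 + q * s ^ k) \<le> s * ln (1 + q)"
proof -
  let ?L = "\<lambda>x. ln (1 + q * x ^ k)"
  let ?\<chi> = "\<lambda>x. ln (?L x) - ln x"
  have "?\<chi> s \<le> ?\<chi> 1"
  proof (rule DERIV_nonneg_imp_nondecreasing[OF s(2)])
    fix x assume "s \<le> x" "x \<le> 1"
    with s have x: "0 < x" "x \<le> 1" by auto
    define y where "y = q * x ^ k"
    have y: "0 < y" "y \<le> q"
      using q x by (auto simp: y_def power_le_one mult_left_le)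
    have L: "?L x = ln (1 + y)" "ln (1 + y) > 0"
      using y by (auto simp: y_def)
    have "(1 + y) * ln (1 + y) / y \<le> real k"
      using one_plus_mult_ln_div_mono[OF y] k by linarith
    hence ky: "(1 + y) * ln (1 + y) \<le> real k * y"
      using y by (simp add: divide_le_eq)
    have xk: "x * x ^ (k - 1) = x ^ k"
      using k(1) by (simp add: power_eq_if)
    have "(?\<chi> has_real_derivative
            real k * q * x ^ (k - 1) / (1 + q * x ^ k) / ?L x - 1 / x) (at x)"
      using x L y unfolding y_def
      by (auto intro!: derivative_eq_intros simp: add_pos_pos mult_ac)
    moreover have "real k * q * x ^ (k - 1) / (1 + q * x ^ k) / ?L x - 1 / x
        = (real k * y - (1 + y) * ln (1 + y)) / (x * (1 + y) * ln (1 + y))"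
    proof -
      have "real k * q * x ^ (k - 1) = real k * y / x"
        using xk x unfolding y_def by (simp add: field_simps)
      moreover have "(real k * y / x) / (1 + y) / ln (1 + y) - 1 / x
          = (real k * y - (1 + y) * ln (1 + y)) / (x * (1 + y) * ln (1 + y))"
        using x y L by (simp add: divide_simps)
      ultimately show ?thesis
        by (simp add: y_def)
    qed
    moreover have "(real k * y - (1 + y) * ln (1 + y)) / (x * (1 + y) * ln (1 + y)) \<ge> 0"
      using ky x y L by (auto intro!: divide_nonneg_pos)
    ultimately show "\<exists>D. (?\<chi> has_real_derivative D) (at x) \<and> D \<ge> 0"
      by metis
  qed
  hence "ln (?L s) \<le> ln (s * ln (1 + q))"
    using s q by (simp add: ln_mult)
  moreover have "?L s > 0" "s * ln (1 + q) > 0"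
    using q s by (auto simp: add_pos_pos)
  ultimately show ?thesis by simp
qed

lemma ff_bounds:
  assumes "k \<ge> 1" "0 < p" "p < 1" "dd \<alpha> n > 1" "1 / dd \<alpha> n \<le> s" "s \<le> 1"
  shows "1 \<le> ff k \<alpha> p n s" "ff k \<alpha> p n s \<le> 1 + p / (1 - p) * s ^ k"
proof -
  define d where "d = dd \<alpha> n"
  define e where "e = d powi (- int k)"
  have e: "e = (1 / d) ^ k"
    by (simp add: e_def power_int_minus power_one_over divide_inverse power_inverse)
  have "0 < e" "e < 1"
    using assms unfolding e d_def by (auto simp: power_less_one_iff)
  moreover have "e \<le> s ^ k"
    unfolding e using assms by (intro power_mono) (auto simp: d_def)
  moreover have "s ^ k \<le> 1"
    using assms by (simp add: power_le_one order.trans[of 0 "1 / dd \<alpha> n" s])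
  ultimately have "0 \<le> (s ^ k - e) / (1 - e)" "(s ^ k - e) / (1 - e) \<le> s ^ k"
    by (auto simp: divide_le_eq algebra_simps)
  moreover have "0 \<le> p / (1 - p)"
    using assms(2,3) by simp
  ultimately have "0 \<le> p / (1 - p) * ((s ^ k - e) / (1 - e))"
    "p / (1 - p) * ((s ^ k - e) / (1 - e)) \<le> p / (1 - p) * s ^ k"
    by (simp_all only: mult_nonneg_nonneg mult_left_mono)
  moreover have "ff k \<alpha> p n s = 1 + p / (1 - p) * ((s ^ k - e) / (1 - e))"
    by (simp add: ff_def d_def e_def)
  ultimately show "1 \<le> ff k \<alpha> p n s" "ff k \<alpha> p n s \<le> 1 + p / (1 - p) * s ^ k"
    by linarith+
qed

lemma ln_ff_le:
  assumes "k \<ge> 1" "0 < p" "p < 1"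
    and "real k \<ge> 1 / (1 - p) * ln (1 / (1 - p)) / (1 / (1 - p) - 1)"
    and "dd \<alpha> n > 1" "1 / dd \<alpha> n \<le> s" "s \<le> 1"
  shows "ln (ff k \<alpha> p n s) \<le> s * ln (1 / (1 - p))"
proof -
  define q where "q = p / (1 - p)"
  have q: "q > 0" "1 / (1 - p) = 1 + q"
    using assms(2,3) by (auto simp: q_def field_simps)
  have "0 < s"
    using assms(5,6) by (smt (verit) divide_pos_pos)
  have "ln (ff k \<alpha> p n s) \<le> ln (1 + q * s ^ k)"
    using ff_bounds[OF assms(1-3,5-7)] by (simp add: q_def)
  also have "\<dots> \<le> s * ln (1 + q)"
    using ln_one_plus_mult_power_le[OF q(1) assms(1) _ \<open>0 < s\<close> assms(7)] assms(4) q(2)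
    by simp
  finally show ?thesis
    using q(2) by simp
qed

lemma WW_le_dd_powr:
  assumes "k \<ge> 1" "0 < p" "p < 1" "r \<ge> 0"
    and "real k \<ge> 1 / (1 - p) * ln (1 / (1 - p)) / (1 / (1 - p) - 1)"
    and "dd \<alpha> n > 1" "1 / dd \<alpha> n \<le> real S / real n" "S \<le> n"
  shows "WW k \<alpha> r p n S \<le> dd \<alpha> n powr (r * ln (1 / (1 - p)) * real S)"
proof -
  define d where "d = dd \<alpha> n"
  define s where "s = real S / real n"
  have "n > 0"
    using assms(6,7) by (cases "n = 0") (auto simp: divide_pos_pos)
  hence Ss: "real n * s = real S"
    by (simp add: s_def)
  have s1: "s \<le> 1"
    using assms(8) by (simp add: s_def divide_le_eq)
  have "ff k \<alpha> p n s \<ge> 1"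
    using ff_bounds(1)[OF assms(1-3,6,7)[unfolded s_def[symmetric]] s1] .
  hence "WW k \<alpha> r p n S = exp (r * real n * ln d * ln (ff k \<alpha> p n s))"
    by (simp add: WW_def mm_def d_def s_def powr_def mult_ac)
  also have "\<dots> \<le> exp (r * real n * ln d * (s * ln (1 / (1 - p))))"
    using ln_ff_le[OF assms(1-3,5,6,7)[unfolded s_def[symmetric]] s1] assms(4,6)
    by (intro exp_mono mult_left_mono) (auto simp: d_def)
  also have "\<dots> = d powr (r * ln (1 / (1 - p)) * real S)"
    using assms(6) by (simp add: powr_def d_def Ss[symmetric] mult_ac)
  finally show ?thesis
    by (simp add: d_def)
qed

lemma BB_le_dd_powr:
  assumes "dd \<alpha> n \<ge> 1"
  shows "BB \<alpha> n S \<le> 2 ^ n * dd \<alpha> n powr (- real S)"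
proof -
  define d where "d = dd \<alpha> n"
  have "BB \<alpha> n S \<le> real (n choose S) * (1 / d) ^ S"
    unfolding BB_def d_def[symmetric] using assms
    by (intro mult_left_le power_le_one) (auto simp: d_def)
  also have "\<dots> \<le> 2 ^ n * (1 / d) ^ S"
    using binomial_le_pow2[of n S] assms
    by (intro mult_right_mono) (auto simp: d_def simp flip: of_nat_le_iff)
  also have "(1 / d) ^ S = d powr (- real S)"
    using assms by (simp add: d_def powr_minus_divide powr_realpow power_one_over)
  finally show ?thesis
    by (simp add: d_def)
qed

lemma Phi_le_dd_powr:
  assumes "k \<ge> 1" "0 < p" "p < 1" "r \<ge> 0"
    and "real k \<ge> 1 / (1 - p) * ln (1 / (1 - p)) / (1 / (1 - p) - 1)"
    and "dd \<alpha> n > 1" "1 / dd \<alpha> n \<le> real S / real n" "S \<le> n"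
  shows "0 \<le> Phi k \<alpha> r p n S"
    and "Phi k \<alpha> r p n S \<le> 2 ^ n * dd \<alpha> n powr (- (1 - r * ln (1 / (1 - p))) * real S)"
proof -
  have B: "0 \<le> BB \<alpha> n S"
    using assms(6) by (simp add: BB_def)
  have W: "0 \<le> WW k \<alpha> r p n S"
    by (simp add: WW_def)
  show "0 \<le> Phi k \<alpha> r p n S"
    using B W by (simp add: Phi_def)
  have "Phi k \<alpha> r p n S
          \<le> 2 ^ n * dd \<alpha> n powr (- real S) * dd \<alpha> n powr (r * ln (1 / (1 - p)) * real S)"
    unfolding Phi_def using BB_le_dd_powr WW_le_dd_powr[OF assms] assms(6) B W
    by (intro mult_mono) auto
  also have "\<dots> = 2 ^ n * dd \<alpha> n powr (- (1 - r * ln (1 / (1 - p))) * real S)"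
    by (simp add: powr_add[symmetric] algebra_simps)
  finally show "Phi k \<alpha> r p n S \<le> 2 ^ n * dd \<alpha> n powr (- (1 - r * ln (1 / (1 - p))) * real S)" .
qed

lemma sum_Phi_le:
  fixes r p \<eta>\<^sub>2 \<eta>\<^sub>3 :: real
  defines "\<theta> \<equiv> r * ln (1 / (1 - p))"
  assumes "k \<ge> 1" "0 < p" "p < 1" "r \<ge> 0"
    and "real k \<ge> 1 / (1 - p) * ln (1 / (1 - p)) / (1 / (1 - p) - 1)"
    and "\<theta> < 1" "\<alpha> > 0" "0 < \<eta>\<^sub>2" "\<eta>\<^sub>3 \<le> 1" "dd \<alpha> n \<ge> max 2 (1 / \<eta>\<^sub>2)"
  shows "0 \<le> (\<Sum>S\<in>{S. real n * \<eta>\<^sub>2 \<le> real S \<and> real S \<le> real n * \<eta>\<^sub>3}. Phi k \<alpha> r p n S)"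
    and "(\<Sum>S\<in>{S. real n * \<eta>\<^sub>2 \<le> real S \<and> real S \<le> real n * \<eta>\<^sub>3}. Phi k \<alpha> r p n S)
           \<le> (real n + 1) * 2 ^ n * real n powr (- (\<alpha> * (1 - \<theta>) * \<eta>\<^sub>2) * real n)"
proof -
  define I where "I = {S. real n * \<eta>\<^sub>2 \<le> real S \<and> real S \<le> real n * \<eta>\<^sub>3}"
  define d where "d = dd \<alpha> n"
  have d: "d \<ge> 2" "1 / d \<le> \<eta>\<^sub>2"
    using assms(9,11) by (auto simp: d_def field_simps)
  have "n > 0"
    using d(1) assms(8) by (cases n) (auto simp: d_def dd_def)
  have I: "I \<subseteq> {..n}"
    using assms(10) by (auto simp: I_def) (smt (verit) of_nat_le_iff mult_left_le of_nat_0_le_iff)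
  have Phi: "0 \<le> Phi k \<alpha> r p n S \<and>
      Phi k \<alpha> r p n S \<le> 2 ^ n * real n powr (- (\<alpha> * (1 - \<theta>) * \<eta>\<^sub>2) * real n)"
    if "S \<in> I" for S
  proof -
    have S: "\<eta>\<^sub>2 \<le> real S / real n" "S \<le> n"
      using that I \<open>n > 0\<close> by (auto simp: I_def field_simps)
    have Phi_le: "0 \<le> Phi k \<alpha> r p n S" "Phi k \<alpha> r p n S \<le> 2 ^ n * d powr (- (1 - \<theta>) * real S)"
      using Phi_le_dd_powr[OF assms(2-6) _ _ S(2)] d S(1)
      by (auto simp: d_def \<theta>_def)
    have "d powr (- (1 - \<theta>) * real S) \<le> d powr (- (1 - \<theta>) * (real n * \<eta>\<^sub>2))"
      using that d(1) assms(7) by (intro powr_mono) (auto simp: I_def)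
    also have "\<dots> = real n powr (- (\<alpha> * (1 - \<theta>) * \<eta>\<^sub>2) * real n)"
      by (simp add: d_def dd_def powr_powr algebra_simps)
    finally show ?thesis
      using Phi_le by (auto intro: order.trans)
  qed
  have "(\<Sum>S\<in>I. Phi k \<alpha> r p n S) \<le> real (card I) * (2 ^ n * real n powr (- (\<alpha> * (1 - \<theta>) * \<eta>\<^sub>2) * real n))"
    using sum_bounded_above[of I "Phi k \<alpha> r p n"] Phi by auto
  also have "\<dots> \<le> (real n + 1) * (2 ^ n * real n powr (- (\<alpha> * (1 - \<theta>) * \<eta>\<^sub>2) * real n))"
    using card_mono[OF _ I] by (intro mult_right_mono) auto
  finally show "(\<Sum>S\<in>{S. real n * \<eta>\<^sub>2 \<le> real S \<and> real S \<le> real n * \<eta>\<^sub>3}. Phi k \<alpha> r p n S)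
      \<le> (real n + 1) * 2 ^ n * real n powr (- (\<alpha> * (1 - \<theta>) * \<eta>\<^sub>2) * real n)"
    by (simp add: I_def mult_ac)
  show "0 \<le> (\<Sum>S\<in>{S. real n * \<eta>\<^sub>2 \<le> real S \<and> real S \<le> real n * \<eta>\<^sub>3}. Phi k \<alpha> r p n S)"
    using Phi by (auto simp: I_def intro: sum_nonneg)
qed

theorem lemma4p9:
  fixes k :: nat and \<alpha> r p \<eta>\<^sub>2 \<eta>\<^sub>3 \<mu> :: real
  defines "\<tau> \<equiv> 1 / (1 - p)"
  defines "\<alpha>\<^sub>0 \<equiv> ((2 * real k - 1) * \<alpha> - 1) / (2 * (real k - 1))"
  assumes "k \<ge> 2" and "\<alpha> > 0" and "r > 0" and "0 < p" and "p < 1"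
    and "(2 * real k - 1) * \<alpha> > 1" and "real k * \<alpha> \<le> 1"
    and "real k \<ge> \<tau> * ln \<tau> / (\<tau> - 1)"
    and "r < 1 / ln \<tau>"
    and "0 < \<eta>\<^sub>2" and "\<eta>\<^sub>2 < \<eta>\<^sub>3" and "\<eta>\<^sub>3 < 1"
    and "\<alpha>\<^sub>0 / \<alpha> - \<mu> * \<eta>\<^sub>2 ^ (k - 1) > 0"
    and "\<mu> > real k * p * r / (1 - p)"
    and "r * ln (1 - p) + \<eta>\<^sub>3 > 0"
  shows "(\<lambda>n. \<Sum>S\<in>{S::nat. real n * \<eta>\<^sub>2 \<le> real S \<and> real S \<le> real n * \<eta>\<^sub>3}.
            Phi k \<alpha> r p n S) \<longlonglongrightarrow> 0"
proof -
  define \<theta> where "\<theta> = r * ln \<tau>"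
  have "ln \<tau> > 0"
    using assms(6,7) by (simp add: \<tau>_def)
  hence \<theta>: "\<theta> < 1"
    using assms(5,11) by (auto simp: \<theta>_def field_simps)
  define K where "K = \<alpha> * (1 - \<theta>) * \<eta>\<^sub>2"
  have "K > 0"
    using \<theta> assms(4,12) by (simp add: K_def)
  have large_d: "\<forall>\<^sub>F n in sequentially. dd \<alpha> n \<ge> max 2 (1 / \<eta>\<^sub>2)"
    using assms(4) unfolding dd_def by real_asymp
  let ?F = "\<lambda>n. \<Sum>S\<in>{S. real n * \<eta>\<^sub>2 \<le> real S \<and> real S \<le> real n * \<eta>\<^sub>3}. Phi k \<alpha> r p n S"
  have bounds: "0 \<le> ?F n \<and> ?F n \<le> (real n + 1) * 2 ^ n * real n powr (- K * real n)"
    if "dd \<alpha> n \<ge> max 2 (1 / \<eta>\<^sub>2)" for n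
    using sum_Phi_le[of k p r \<alpha> \<eta>\<^sub>2 \<eta>\<^sub>3 n] that assms(3-7,10,12,14) \<theta>
    by (simp add: K_def \<theta>_def \<tau>_def)
  show ?thesis
  proof (rule tendsto_sandwich[OF _ _ tendsto_const])
    show "(\<lambda>n. (real n + 1) * 2 ^ n * real n powr (- K * real n)) \<longlonglongrightarrow> 0"
      using \<open>K > 0\<close> by real_asymp
  qed (use large_d bounds in \<open>auto elim!: eventually_mono\<close>)
qed

end
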